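(* Let $G$ be a transitively closed directed acyclic graph on $[n]$ with $G^{un}$ connected. A subgraph $H\subseteq G$ gives a facet $Q_H$ of $\tilde Q_G$ (not containing the origin) if and only if $H^{un}$ is connected and $H=G_{L,R}$ for some partition $[n]=L\sqcup R$.
   Context: Conventions: $G$ is a directed acyclic graph with vertex set $[n]$, every edge $(i,j)$ satisfying $i<j$; subgraphs $H\subseteq G$ have $V(H)=[n]$, $E(H)\subseteq E(G)$; $^{un}$ denotes underlying undirected graph. $Q_H=\mathrm{conv}\{\mathbf e_i-\mathbf e_j:(i,j)\in E(H)\}$, $\tilde Q_G=\mathrm{conv}(\{\mathbf 0\}\cup\{\mathbf e_i-\mathbf e_j:(i,j)\in E(G)\})$ in $\mathbb R^n$. $G$ is transitively closed if $(i,j),(j,k)\in E(G)$ implies $(i,k)\in E(G)$. For disjoint $L,R\subseteq[n]$, $G_{L,R}$ is the subgraph with edge set $\{(i,j)\in E(G):i\in L,j\in R\}$. A facet is a face of codimension 1. *)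

theory Defs
  imports "HOL-Analysis.Analysis"
begin

text \<open>Vertices are the elements of a finite linearly ordered type 'n (standing for [n]);
  a directed graph on [n] is given by its edge set E; a subgraph is given by a subset of edges
  (vertex set always all of 'n).\<close>

definition dag_ordered :: "('n::linorder \<times> 'n) set \<Rightarrow> bool" where
  "dag_ordered E \<longleftrightarrow> (\<forall>(i,j)\<in>E. i < j)"

definition trans_closed :: "('n \<times> 'n) set \<Rightarrow> bool" where
  "trans_closed E \<longleftrightarrow> (\<forall>i j k. (i,j) \<in> E \<and> (j,k) \<in> E \<longrightarrow> (i,k) \<in> E)"

definition un_connected :: "('n \<times> 'n) set \<Rightarrow> bool" where
  "un_connected E \<longleftrightarrow> (\<forall>u v. (u, v) \<in> (E \<union> E\<inverse>)\<^sup>*)"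

definition Q_poly :: "('n::finite \<times> 'n) set \<Rightarrow> (real^'n) set" where
  "Q_poly E = convex hull {axis i 1 - axis j 1 | i j. (i,j) \<in> E}"

definition Q_tilde :: "('n::finite \<times> 'n) set \<Rightarrow> (real^'n) set" where
  "Q_tilde E = convex hull (insert 0 {axis i 1 - axis j 1 | i j. (i,j) \<in> E})"

definition G_LR :: "('n \<times> 'n) set \<Rightarrow> 'n set \<Rightarrow> 'n set \<Rightarrow> ('n \<times> 'n) set" where
  "G_LR E L R = {(i,j) \<in> E. i \<in> L \<and> j \<in> R}"

text \<open>Facet as in the paper: a face of codimension 1. (Differs from the library's
  facet_of only in not excluding the empty face, which matters only when n = 1.)\<close>
definition is_facet :: "(real^'n) set \<Rightarrow> (real^'n) set \<Rightarrow> bool" where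
  "is_facet F P \<longleftrightarrow> F face_of P \<and> aff_dim F = aff_dim P - 1"

end

theory Submission
  imports Defs
begin

(* A face of Q~_G avoiding the origin is exposed by a hyperplane c . x = 1 with
  c_i - c_j <= 1 on all edges of G, so it is the convex hull of the edge vectors
  e_i - e_j of the tight edges (c_i - c_j = 1); as different subgraphs of a DAG have
  different polytopes Q_H, the face is Q_H exactly for H the tight subgraph. Its
  dimension is dim span {e_i - e_j : (i, j) in H} - 1, and this span is the whole
  zero-sum hyperplane iff H^un is connected, so the face is a facet iff H^un is
  connected. By transitivity no vertex is both a tail and a head of a tight edge;
  along a connected H the potential c is then constant on the set L of tails and one
  less elsewhere, which gives H = G_{L, [n] - L}. Conversely, for a partition
  [n] = L + R the indicator vector of L exposes the face Q_{G_{L,R}}. *)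

definition edge_vectors :: "('n::finite \<times> 'n) set \<Rightarrow> (real^'n) set" where
  "edge_vectors E = (\<lambda>(i, j). axis i 1 - axis j 1) ` E"

lemma edge_vectors_eq: "{axis i 1 - axis j 1 | i j. (i, j) \<in> E} = edge_vectors E"
  unfolding edge_vectors_def by force

lemma Q_poly_eq: "Q_poly E = convex hull edge_vectors E"
  unfolding Q_poly_def edge_vectors_eq ..

lemma Q_tilde_eq: "Q_tilde E = convex hull insert 0 (edge_vectors E)"
  unfolding Q_tilde_def edge_vectors_eq ..

lemma mem_edge_vectors:
  "x \<in> edge_vectors E \<longleftrightarrow> (\<exists>i j. (i, j) \<in> E \<and> x = axis i 1 - axis j 1)"
  unfolding edge_vectors_def by force

lemma finite_edge_vectors [simp]: "finite (edge_vectors (E::('n::finite \<times> 'n) set))"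
  unfolding edge_vectors_def by simp

lemma inner_axis_diff: "(a::real^'n::finite) \<bullet> (axis i 1 - axis j 1) = a$i - a$j"
  by (simp add: inner_diff_right inner_axis)

lemma aff_dim_insert_zero: "aff_dim (insert 0 (V::'a::euclidean_space set)) = int (dim V)"
proof -
  have "0 \<in> affine hull (insert 0 V)" by (simp add: hull_inc)
  then have "aff_dim (insert 0 V) = int (dim ((+) (- 0) ` insert 0 V))"
    by (rule aff_dim_eq_dim)
  also have "\<dots> = int (dim V)" by (simp add: dim_insert span_zero)
  finally show ?thesis .
qed

lemma aff_dim_subset_hyperplane:
  fixes V :: "'a::euclidean_space set"
  assumes "V \<subseteq> {x. c \<bullet> x = 1}"
  shows "aff_dim V = int (dim V) - 1"
proof -
  have "affine hull V \<subseteq> {x. c \<bullet> x = 1}"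
    using assms by (intro hull_minimal) (auto simp: affine_hyperplane)
  then have "0 \<notin> affine hull V" by auto
  then show ?thesis using aff_dim_insert_zero[of V] by (simp add: aff_dim_insert)
qed

lemma dim_sum_zero_hyperplane: "dim {x::real^'n::finite. 1 \<bullet> x = 0} = CARD('n) - 1"
  using dim_hyperplane[of "1::real^'n"] by (simp add: vec_eq_iff)

lemma span_edge_vectors_subset: "span (edge_vectors E) \<subseteq> {x::real^'n::finite. 1 \<bullet> x = 0}"
  by (intro span_minimal) (auto simp: edge_vectors_def inner_axis_diff subspace_hyperplane)

lemma axis_diff_in_span_edge_vectors:
  assumes "(u, v) \<in> (E \<union> E\<inverse>)\<^sup>*"
  shows "axis u 1 - axis v 1 \<in> span (edge_vectors (E::('n::finite \<times> 'n) set))"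
  using assms
proof (induction rule: rtrancl_induct)
  case base
  then show ?case by (simp add: span_zero)
next
  case (step w v)
  have "axis w 1 - axis v 1 \<in> span (edge_vectors E)"
  proof (cases "(w, v) \<in> E")
    case True
    then show ?thesis by (intro span_base) (force simp: edge_vectors_def)
  next
    case False
    then have "axis v 1 - axis w 1 \<in> edge_vectors E"
      using step.hyps(2) by (force simp: edge_vectors_def)
    then have "- (axis v 1 - axis w 1) \<in> span (edge_vectors E)" by (intro span_neg span_base)
    then show ?thesis by simp
  qed
  then have "(axis u 1 - axis w 1) + (axis w 1 - axis v 1) \<in> span (edge_vectors E)"
    using step.IH by (intro span_add)
  then show ?case by simp
qed

lemma span_edge_vectors_connected:
  assumes "un_connected E"
  shows "span (edge_vectors E) = {x::real^'n::finite. 1 \<bullet> x = 0}"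
proof
  show "{x. 1 \<bullet> x = 0} \<subseteq> span (edge_vectors E)"
  proof
    fix x :: "real^'n" assume "x \<in> {x. 1 \<bullet> x = 0}"
    then have sum_zero: "(\<Sum>i\<in>UNIV. x$i) = 0" by (simp add: inner_vec_def)
    fix v :: 'n
    have "x = (\<Sum>i\<in>UNIV. x$i *\<^sub>R axis i 1) - (\<Sum>i\<in>UNIV. x$i) *\<^sub>R axis v 1"
      using basis_expansion[of x] sum_zero by (simp add: scalar_mult_eq_scaleR)
    also have "\<dots> = (\<Sum>i\<in>UNIV. x$i *\<^sub>R (axis i 1 - axis v 1))"
      by (simp add: scaleR_diff_right sum_subtractf scaleR_sum_left)
    also have "\<dots> \<in> span (edge_vectors E)"
      using assms unfolding un_connected_def
      by (intro span_sum span_scale axis_diff_in_span_edge_vectors) blast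
    finally show "x \<in> span (edge_vectors E)" .
  qed
qed (rule span_edge_vectors_subset)

text \<open>A component C of a disconnected H gives a second linear relation
  \<open>(\<Sum>k\<in>C. x$k) = 0\<close> on the edge vectors of H.\<close>
lemma dim_edge_vectors_disconnected:
  assumes "\<not> un_connected H"
  shows "dim (edge_vectors (H::('n::finite \<times> 'n) set)) < CARD('n) - 1"
proof -
  obtain u v where uv: "(u, v) \<notin> (H \<union> H\<inverse>)\<^sup>*"
    using assms unfolding un_connected_def by blast
  define C where "C = {w. (u, w) \<in> (H \<union> H\<inverse>)\<^sup>*}"
  define a :: "real^'n::finite" where "a = (\<chi> k. if k \<in> C then 1 else 0)"
  have closed: "i \<in> C \<longleftrightarrow> j \<in> C" if "(i, j) \<in> H" for i j
    using that unfolding C_def by (auto intro: rtrancl.rtrancl_into_rtrancl)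
  have "span (edge_vectors H) \<subseteq> {x. 1 \<bullet> x = 0} \<inter> {x. a \<bullet> x = 0}"
    using closed
    by (intro span_minimal subspace_inter subspace_hyperplane)
       (auto simp: edge_vectors_def inner_axis_diff a_def)
  moreover have "u \<in> C" "v \<notin> C" using uv unfolding C_def by auto
  then have "a \<bullet> (axis u 1 - axis v 1) \<noteq> 0"
    unfolding inner_axis_diff by (simp add: a_def)
  moreover have "axis u 1 - axis v 1 \<in> {x::real^'n. 1 \<bullet> x = 0}"
    by (simp add: inner_axis_diff)
  ultimately have "span (edge_vectors H) \<subset> span {x::real^'n. 1 \<bullet> x = 0}"
    by (auto simp: span_eq_iff[THEN iffD2, OF subspace_hyperplane])
  from dim_psubset[OF this] show ?thesis by (simp add: dim_sum_zero_hyperplane)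
qed

lemma dim_edge_vectors_eq_iff:
  "dim (edge_vectors (H::('n::finite \<times> 'n) set)) = CARD('n) - 1 \<longleftrightarrow> un_connected H"
proof
  assume "un_connected H"
  then show "dim (edge_vectors H) = CARD('n) - 1"
    by (metis dim_span span_edge_vectors_connected dim_sum_zero_hyperplane)
qed (use dim_edge_vectors_disconnected in fastforce)

text \<open>For \<open>i < j\<close> the functional \<open>d = e\<^sub>i - e\<^sub>j\<close> is at most 1 on every edge vector
  of the DAG H other than d itself, and equals 2 on d.\<close>
lemma edge_vector_in_Q_poly_imp_edge:
  fixes i j :: "'n::{finite,linorder}"
  assumes "dag_ordered H" "i < j" "axis i 1 - axis j 1 \<in> Q_poly H"
  shows "(i, j) \<in> H"
proof (rule ccontr)
  assume not_edge: "(i, j) \<notin> H"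
  define d where "d = axis i 1 - axis j (1::real)"
  have "d \<bullet> x \<le> 1" if x: "x \<in> edge_vectors H" for x
  proof -
    obtain k l where kl: "(k, l) \<in> H" "x = axis k 1 - axis l 1"
      using x unfolding mem_edge_vectors by blast
    have "k < l" using kl(1) assms(1) unfolding dag_ordered_def by auto
    have "d \<bullet> x = d$k - d$l" unfolding kl(2) by (rule inner_axis_diff)
    then show ?thesis
      using kl(1) not_edge \<open>k < l\<close> \<open>i < j\<close> by (auto simp: d_def axis_def)
  qed
  then have "Q_poly H \<subseteq> {x. d \<bullet> x \<le> 1}"
    unfolding Q_poly_eq by (intro hull_minimal) (auto simp: convex_halfspace_le)
  then have "d \<bullet> d \<le> 1" using assms(3) d_def by auto
  moreover have "d \<bullet> d = d$i - d$j" unfolding d_def by (rule inner_axis_diff)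
  then have "d \<bullet> d = 2" using \<open>i < j\<close> by (simp add: d_def axis_def)
  ultimately show False by simp
qed

lemma subset_if_Q_poly_subset:
  assumes "dag_ordered H" "dag_ordered H'" "Q_poly H \<subseteq> Q_poly H'"
  shows "H \<subseteq> H'"
proof (intro subrelI edge_vector_in_Q_poly_imp_edge[OF assms(2)])
  fix i j assume ij: "(i, j) \<in> H"
  then show "i < j" using assms(1) unfolding dag_ordered_def by auto
  have "axis i 1 - axis j 1 \<in> edge_vectors H" using ij by (auto simp: mem_edge_vectors)
  then show "axis i 1 - axis j 1 \<in> Q_poly H'"
    using assms(3) unfolding Q_poly_eq by (auto intro: hull_inc)
qed

lemma Q_poly_inject:
  assumes "dag_ordered H" "dag_ordered H'" "Q_poly H = Q_poly H'"
  shows "H = H'"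
  using subset_if_Q_poly_subset[of H H'] subset_if_Q_poly_subset[of H' H] assms by auto

lemma convex_hull_Int_supporting_hyperplane:
  fixes S :: "'a::euclidean_space set"
  assumes "finite S" and le: "\<And>x. x \<in> S \<Longrightarrow> c \<bullet> x \<le> b"
  shows "convex hull S \<inter> {x. c \<bullet> x = b} = convex hull {x \<in> S. c \<bullet> x = b}"
proof
  have "convex hull S \<subseteq> {x. c \<bullet> x \<le> b}"
    using le by (intro hull_minimal) (auto simp: convex_halfspace_le)
  then have face: "convex hull S \<inter> {x. c \<bullet> x = b} face_of convex hull S"
    by (intro face_of_Int_supporting_hyperplane_le) auto
  obtain S' where S': "S' \<subseteq> S" "convex hull S \<inter> {x. c \<bullet> x = b} = convex hull S'"
    using face_of_convex_hull_subset[OF finite_imp_compact[OF \<open>finite S\<close>] face] by blast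
  have "S' \<subseteq> {x \<in> S. c \<bullet> x = b}"
    using S' hull_subset[of S' convex] by blast
  then show "convex hull S \<inter> {x. c \<bullet> x = b} \<subseteq> convex hull {x \<in> S. c \<bullet> x = b}"
    unfolding S'(2) by (rule hull_mono)
next
  show "convex hull {x \<in> S. c \<bullet> x = b} \<subseteq> convex hull S \<inter> {x. c \<bullet> x = b}"
    by (intro hull_minimal Int_greatest hull_mono convex_Int convex_convex_hull convex_hyperplane)
       (auto intro: hull_inc)
qed

text \<open>Scaling the exposing functional is possible because \<open>0 \<in> P\<close> lies strictly
  on the bounded side.\<close>
lemma face_avoiding_zero_exposed:
  fixes P :: "'a::euclidean_space set"
  assumes "polyhedron P" "0 \<in> P" "F face_of P" "0 \<notin> F"
  obtains c where "\<And>x. x \<in> P \<Longrightarrow> c \<bullet> x \<le> 1" "F = P \<inter> {x. c \<bullet> x = 1}"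
proof -
  have "F exposed_face_of P" using assms(1,3) exposed_face_of_polyhedron by blast
  then obtain a b where ab: "P \<subseteq> {x. a \<bullet> x \<le> b}" "F = P \<inter> {x. a \<bullet> x = b}"
    unfolding exposed_face_of_def by blast
  have "0 \<le> b" using assms(2) ab(1) by auto
  moreover have "b \<noteq> 0" using assms(2,4) ab(2) by auto
  ultimately have "b > 0" by simp
  then have scale: "inverse b *\<^sub>R a \<bullet> x = inverse b * (a \<bullet> x)"
    "inverse b * t \<le> 1 \<longleftrightarrow> t \<le> b" "inverse b * t = 1 \<longleftrightarrow> t = b" for x t
    by (auto simp: field_simps)
  show ?thesis
  proof
    show "inverse b *\<^sub>R a \<bullet> x \<le> 1" if "x \<in> P" for x
      using ab(1) that unfolding scale by blast
    show "F = P \<inter> {x. inverse b *\<^sub>R a \<bullet> x = 1}"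
      unfolding ab(2) scale ..
  qed
qed

definition tight_edges :: "('n::finite \<times> 'n) set \<Rightarrow> real^'n \<Rightarrow> ('n \<times> 'n) set" where
  "tight_edges E c = {(i, j) \<in> E. c$i - c$j = 1}"

lemma tight_edges_subset: "tight_edges E c \<subseteq> E"
  unfolding tight_edges_def by blast

lemma G_LR_eq_tight_edges:
  assumes "L \<inter> R = {}" "L \<union> R = UNIV"
  shows "G_LR E L R = tight_edges E (\<chi> k. if k \<in> L then 1 else 0)"
  using assms unfolding G_LR_def tight_edges_def by (auto split: if_splits)

lemma edge_vectors_tight_edges: "edge_vectors (tight_edges E c) \<subseteq> {x. c \<bullet> x = 1}"
  by (auto simp: mem_edge_vectors tight_edges_def inner_axis_diff)

lemma Q_tilde_subset_halfspace:
  assumes "\<And>i j. (i, j) \<in> E \<Longrightarrow> c$i - c$j \<le> 1"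
  shows "Q_tilde E \<subseteq> {x. c \<bullet> x \<le> 1}"
  unfolding Q_tilde_eq using assms
  by (intro hull_minimal) (auto simp: convex_halfspace_le mem_edge_vectors inner_axis_diff)

lemma Q_tilde_Int_hyperplane:
  assumes "\<And>i j. (i, j) \<in> E \<Longrightarrow> c$i - c$j \<le> 1"
  shows "Q_tilde E \<inter> {x. c \<bullet> x = 1} = Q_poly (tight_edges E c)"
proof -
  have "x \<in> insert 0 (edge_vectors E) \<and> c \<bullet> x = 1 \<longleftrightarrow> x \<in> edge_vectors (tight_edges E c)"
    for x by (auto simp: mem_edge_vectors tight_edges_def inner_axis_diff) blast
  then have "{x \<in> insert 0 (edge_vectors E). c \<bullet> x = 1} = edge_vectors (tight_edges E c)"
    by blast
  then show ?thesis
    using assms unfolding Q_tilde_eq Q_poly_eq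
    by (subst convex_hull_Int_supporting_hyperplane)
       (auto simp: mem_edge_vectors inner_axis_diff)
qed

lemma face_of_Q_tilde_tight_edges:
  assumes "\<And>i j. (i, j) \<in> E \<Longrightarrow> c$i - c$j \<le> 1"
  shows "Q_poly (tight_edges E c) face_of Q_tilde E"
proof -
  have "Q_tilde E \<subseteq> {x. c \<bullet> x \<le> 1}" using assms by (rule Q_tilde_subset_halfspace)
  then have "Q_tilde E \<inter> {x. c \<bullet> x = 1} face_of Q_tilde E"
    by (intro face_of_Int_supporting_hyperplane_le) (auto simp: Q_tilde_def)
  moreover have "Q_tilde E \<inter> {x. c \<bullet> x = 1} = Q_poly (tight_edges E c)"
    using assms by (rule Q_tilde_Int_hyperplane)
  ultimately show ?thesis by simp
qed

lemma zero_notin_Q_poly_tight_edges: "0 \<notin> Q_poly (tight_edges E c)"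
proof -
  have "Q_poly (tight_edges E c) \<subseteq> {x. c \<bullet> x = 1}"
    unfolding Q_poly_eq using edge_vectors_tight_edges
    by (intro hull_minimal) (auto simp: convex_hyperplane)
  then show ?thesis by auto
qed

lemma aff_dim_Q_tilde:
  fixes E :: "('n::finite \<times> 'n) set"
  assumes "un_connected E"
  shows "aff_dim (Q_tilde E) = int CARD('n) - 1"
proof -
  have "dim (edge_vectors E) = CARD('n) - 1" using assms by (rule dim_edge_vectors_eq_iff[THEN iffD2])
  moreover have "0 < CARD('n)" by simp
  ultimately show ?thesis
    unfolding Q_tilde_eq aff_dim_convex_hull aff_dim_insert_zero by (simp add: of_nat_diff)
qed

lemma is_facet_tight_edges_iff:
  fixes E :: "('n::finite \<times> 'n) set"
  assumes "un_connected E" and "\<And>i j. (i, j) \<in> E \<Longrightarrow> c$i - c$j \<le> 1"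
  shows "is_facet (Q_poly (tight_edges E c)) (Q_tilde E) \<longleftrightarrow> un_connected (tight_edges E c)"
proof -
  have "aff_dim (Q_poly (tight_edges E c)) = int (dim (edge_vectors (tight_edges E c))) - 1"
    unfolding Q_poly_eq aff_dim_convex_hull
    by (rule aff_dim_subset_hyperplane[OF edge_vectors_tight_edges])
  moreover have "Q_poly (tight_edges E c) face_of Q_tilde E"
    using assms(2) by (rule face_of_Q_tilde_tight_edges)
  moreover have "int d - 1 = int CARD('n) - 1 - 1 \<longleftrightarrow> d = CARD('n) - 1" for d
    using zero_less_card_finite[where 'a='n] by linarith
  ultimately show ?thesis
    unfolding is_facet_def aff_dim_Q_tilde[OF assms(1)] dim_edge_vectors_eq_iff[symmetric]
    by simp
qed

lemma face_avoiding_zero_eq_tight_edges: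
  assumes "dag_ordered E" "H \<subseteq> E" "Q_poly H face_of Q_tilde E" "0 \<notin> Q_poly H"
  obtains c where "\<And>i j. (i, j) \<in> E \<Longrightarrow> c$i - c$j \<le> 1" "H = tight_edges E c"
proof -
  have "polyhedron (Q_tilde E)"
    unfolding Q_tilde_eq by (intro polytope_imp_polyhedron polytope_convex_hull) simp
  moreover have "0 \<in> Q_tilde E" unfolding Q_tilde_eq by (simp add: hull_inc)
  ultimately obtain c where le: "\<And>x. x \<in> Q_tilde E \<Longrightarrow> c \<bullet> x \<le> 1"
    and eq: "Q_poly H = Q_tilde E \<inter> {x. c \<bullet> x = 1}"
    using face_avoiding_zero_exposed assms(3,4) by blast
  have bound: "c$i - c$j \<le> 1" if "(i, j) \<in> E" for i j
  proof -
    have "axis i 1 - axis j 1 \<in> Q_tilde E"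
      unfolding Q_tilde_eq using that by (intro hull_inc) (auto simp: mem_edge_vectors)
    from le[OF this] show ?thesis by (simp add: inner_axis_diff)
  qed
  have "dag_ordered H" "dag_ordered (tight_edges E c)"
    using assms(1,2) tight_edges_subset unfolding dag_ordered_def by blast+
  moreover have "Q_poly H = Q_poly (tight_edges E c)"
    unfolding eq using bound by (rule Q_tilde_Int_hyperplane)
  ultimately have "H = tight_edges E c" by (rule Q_poly_inject)
  with bound that show ?thesis by blast
qed

lemma tight_edges_Domain_Range_disjoint:
  assumes "trans_closed E" and "\<And>i j. (i, j) \<in> E \<Longrightarrow> c$i - c$j \<le> 1"
  shows "Domain (tight_edges E c) \<inter> Range (tight_edges E c) = {}"
proof (rule ccontr)
  assume "Domain (tight_edges E c) \<inter> Range (tight_edges E c) \<noteq> {}"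
  then obtain i j k where "(i, j) \<in> tight_edges E c" "(j, k) \<in> tight_edges E c"
    by auto
  then have "(i, j) \<in> E" "(j, k) \<in> E" "c$i - c$j = 1" "c$j - c$k = 1"
    unfolding tight_edges_def by simp_all
  then have "(i, k) \<in> E" "c$i - c$k = 2"
    using assms(1) unfolding trans_closed_def by (blast, linarith)
  then show False using assms(2)[of i k] by simp
qed

lemma connected_unit_potential:
  fixes p :: "'a \<Rightarrow> real"
  assumes "un_connected H" and "\<And>i j. (i, j) \<in> H \<Longrightarrow> p i - p j = 1"
    and "Domain H \<inter> Range H = {}" and "u \<in> Domain H"
  shows "p w = p u - (if w \<in> Domain H then 0 else 1)"
proof -
  have "(u, w) \<in> (H \<union> H\<inverse>)\<^sup>*" using assms(1) unfolding un_connected_def by blast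
  then show ?thesis
  proof (induction rule: rtrancl_induct)
    case base
    then show ?case using assms(4) by simp
  next
    case (step y z)
    then consider "(y, z) \<in> H" | "(z, y) \<in> H" by blast
    then show ?case
    proof cases
      case 1
      then have "y \<in> Domain H" "z \<notin> Domain H" using assms(3) by blast+
      then show ?thesis using step.IH assms(2)[OF 1] by simp
    next
      case 2
      then have "z \<in> Domain H" "y \<notin> Domain H" using assms(3) by blast+
      then show ?thesis using step.IH assms(2)[OF 2] by simp
    qed
  qed
qed

lemma connected_tight_edges_eq_G_LR:
  assumes "trans_closed E" and bound: "\<And>i j. (i, j) \<in> E \<Longrightarrow> c$i - c$j \<le> 1"
    and "un_connected (tight_edges E c)"
  defines "L \<equiv> Domain (tight_edges E c)"
  shows "tight_edges E c = G_LR E L (- L)"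
proof (intro subset_antisym subrelI)
  have disjoint: "L \<inter> Range (tight_edges E c) = {}"
    unfolding L_def using assms(1) bound by (rule tight_edges_Domain_Range_disjoint)
  fix i j
  show "(i, j) \<in> G_LR E L (- L)" if ij: "(i, j) \<in> tight_edges E c"
  proof -
    have "i \<in> L" "j \<in> Range (tight_edges E c)" using ij unfolding L_def by blast+
    moreover have "(i, j) \<in> E" using ij tight_edges_subset by blast
    ultimately show ?thesis using disjoint unfolding G_LR_def by blast
  qed
  show "(i, j) \<in> tight_edges E c" if ij: "(i, j) \<in> G_LR E L (- L)"
  proof -
    have "i \<in> L" "j \<notin> L" "(i, j) \<in> E" using ij unfolding G_LR_def by auto
    have unit: "\<And>k l. (k, l) \<in> tight_edges E c \<Longrightarrow> c$k - c$l = 1"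
      unfolding tight_edges_def by blast
    have "c$j = c$i - (if j \<in> L then 0 else 1)"
      using assms(3) unit disjoint \<open>i \<in> L\<close> unfolding L_def by (rule connected_unit_potential)
    with \<open>j \<notin> L\<close> \<open>(i, j) \<in> E\<close> show ?thesis unfolding tight_edges_def by simp
  qed
qed

lemma is_facet_G_LR_iff:
  fixes E :: "('n::finite \<times> 'n) set"
  assumes "un_connected E" "L \<inter> R = {}" "L \<union> R = UNIV"
  shows "is_facet (Q_poly (G_LR E L R)) (Q_tilde E) \<longleftrightarrow> un_connected (G_LR E L R)"
    and "0 \<notin> Q_poly (G_LR E L R)"
proof -
  define c where "c = (\<chi> k. if k \<in> L then 1 else (0::real))"
  have H: "G_LR E L R = tight_edges E c"
    unfolding c_def using assms(2,3) by (rule G_LR_eq_tight_edges)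
  have "\<And>i j. (i, j) \<in> E \<Longrightarrow> c$i - c$j \<le> 1" by (simp add: c_def)
  with assms(1) show "is_facet (Q_poly (G_LR E L R)) (Q_tilde E) \<longleftrightarrow> un_connected (G_LR E L R)"
    unfolding H by (rule is_facet_tight_edges_iff)
  show "0 \<notin> Q_poly (G_LR E L R)" unfolding H by (rule zero_notin_Q_poly_tight_edges)
qed

theorem mainTheorem16:
  fixes E H :: "('n::{finite,linorder} \<times> 'n) set"
  assumes "dag_ordered E" and "trans_closed E" and "un_connected E"
    and "H \<subseteq> E"
  shows "(is_facet (Q_poly H) (Q_tilde E) \<and> 0 \<notin> Q_poly H) \<longleftrightarrow>
         (un_connected H \<and>
          (\<exists>L R. L \<inter> R = {} \<and> L \<union> R = UNIV \<and> H = G_LR E L R))"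
proof
  assume facet: "is_facet (Q_poly H) (Q_tilde E) \<and> 0 \<notin> Q_poly H"
  then have face: "Q_poly H face_of Q_tilde E" and zero: "0 \<notin> Q_poly H"
    unfolding is_facet_def by auto
  obtain c where bound: "\<And>i j. (i, j) \<in> E \<Longrightarrow> c$i - c$j \<le> 1"
    and H: "H = tight_edges E c"
    using face_avoiding_zero_eq_tight_edges[OF assms(1,4) face zero] by blast
  have "is_facet (Q_poly H) (Q_tilde E) \<longleftrightarrow> un_connected H"
    unfolding H using assms(3) bound by (rule is_facet_tight_edges_iff)
  with facet have "un_connected H" by blast
  moreover have "H = G_LR E (Domain H) (- Domain H)"
    unfolding H using assms(2) bound \<open>un_connected H\<close>[unfolded H]
    by (rule connected_tight_edges_eq_G_LR)
  ultimately show "un_connected H \<and> (\<exists>L R. L \<inter> R = {} \<and> L \<union> R = UNIV \<and> H = G_LR E L R)"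
    by (intro conjI exI[of _ "Domain H"] exI[of _ "- Domain H"]) auto
next
  assume "un_connected H \<and> (\<exists>L R. L \<inter> R = {} \<and> L \<union> R = UNIV \<and> H = G_LR E L R)"
  then obtain L R where "un_connected H" "L \<inter> R = {}" "L \<union> R = UNIV" "H = G_LR E L R"
    by blast
  then show "is_facet (Q_poly H) (Q_tilde E) \<and> 0 \<notin> Q_poly H"
    using is_facet_G_LR_iff[OF assms(3)] by blast
qed

end
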